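(* For generic values of the parameters $u,v\in\mathbb{C}$, the following holds for each $x\in\{l,r\}$. - Each of the two root subspaces (generalized eigenspaces) of $h^{cl}_x$ coincides with one of the two root subspaces of $M^{cl}(v)$. - Each of the two root subspaces of $h^{q}_x$ coincides with one of the two root subspaces of $M^{q}(v)$. In each case, the common root subspaces are each of dimension $N$, and on each of them the restriction of each matrix consists of a single Jordan block.
   Context: All matrices are $2N\times 2N$ complex matrices, indexed by $1,\dots,2N$. Entries not listed are zero, and only index pairs lying in $\{1,\dots,2N\}^2$ are meant. Here $\mathrm{i}$ is the imaginary unit, $s=1/\cosh(u)$, $\lambda_{cl}(v)=\tanh(v)\coth(u-v)$ and $\lambda_q(v)=\tanh(u-v)\coth(v)$. In all formulas $1\le i\le N$, $1\le j\le 2N$ and $k\ge 1$. The matrix $M^{cl}(v)$ is lower triangular, with entries - $M^{cl}_{2i-1,2i-1}=-\mathrm{i}\coth(u-v)$ and $M^{cl}_{2i,2i}=\mathrm{i}\tanh(v)$; - $M^{cl}_{2i-1+2k,\,2i-1}=-\mathrm{i}\,\lambda_{cl}^{k-1}/(\coth(v)\sinh^2(u-v))$; - $M^{cl}_{2i+2k,\,2i}=-\mathrm{i}\,\lambda_{cl}^{k-1}/(\tanh(u-v)\cosh^2(v))$; - $M^{cl}_{j+2k-1,\,j}=-\mathrm{i}\,\lambda_{cl}^{k-1}/(\cosh(v)\sinh(u-v))$. The matrix $M^{q}(v)$ is upper triangular, with entries - $M^{q}_{2i-1,2i-1}=-\mathrm{i}\tanh(u-v)$ and $M^{q}_{2i,2i}=\mathrm{i}\coth(v)$;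 - $M^{q}_{2i-1,\,2i-1+2k}=\mathrm{i}\,\lambda_q^{k-1}/(\tanh(v)\cosh^2(u-v))$; - $M^{q}_{2i,\,2i+2k}=\mathrm{i}\,\lambda_q^{k-1}/(\coth(u-v)\sinh^2(v))$; - $M^{q}_{j,\,j+2k-1}=\mathrm{i}\,\lambda_q^{k-1}/(\sinh(v)\cosh(u-v))$. The local matrices have entries (with $1\le j\le 2N-1$ wherever $j$ appears): - $h^{cl}_l$: $(h^{cl}_l)_{2i,2i}=1$ for $1\le i\le N$; $(h^{cl}_l)_{j+1,j}=-s$; $(h^{cl}_l)_{2i+1,2i-1}=1$ for $1\le i\le N-1$. - $h^{q}_l$: $(h^{q}_l)_{2i,2i}=1$; $(h^{q}_l)_{j,j+1}=s$; $(h^{q}_l)_{2i-1,2i+1}=1$ for $1\le i\le N-1$. - $h^{cl}_r$: $(h^{cl}_r)_{2i-1,2i-1}=1$; $(h^{cl}_r)_{j+1,j}=s$; $(h^{cl}_r)_{2i+2,2i}=1$ for $1\le i\le N-1$. - $h^{q}_r$: $(h^{q}_r)_{2i-1,2i-1}=1$; $(h^{q}_r)_{j,j+1}=-s$; $(h^{q}_r)_{2i,2i+2}=1$ for $1\le i\le N-1$. *)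

theory Defs
  imports "Jordan_Normal_Form.Jordan_Normal_Form_Uniqueness" "HOL-Analysis.Elementary_Topology"
begin

definition coth :: "complex \<Rightarrow> complex" where
  "coth x = cosh x / sinh x"

definition mat1 :: "nat \<Rightarrow> (nat \<Rightarrow> nat \<Rightarrow> complex) \<Rightarrow> complex mat" where
  "mat1 N f = mat (2*N) (2*N) (\<lambda>(a,b). f (a+1) (b+1))"

definition s_par :: "complex \<Rightarrow> complex" where
  "s_par u = 1 / cosh u"

definition lam_cl :: "complex \<Rightarrow> complex \<Rightarrow> complex" where
  "lam_cl u v = tanh v * coth (u - v)"

definition lam_q :: "complex \<Rightarrow> complex \<Rightarrow> complex" where
  "lam_q u v = tanh (u - v) * coth v"

definition Mcl :: "nat \<Rightarrow> complex \<Rightarrow> complex \<Rightarrow> complex mat" where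
  "Mcl N u v = mat1 N (\<lambda>a b.
     if a = b then (if odd b then - \<i> * coth (u - v) else \<i> * tanh v)
     else if b < a \<and> even (a - b) then
       (let k = (a - b) div 2 in
        if odd b then - \<i> * lam_cl u v ^ (k - 1) / (coth v * sinh (u - v) ^ 2)
        else - \<i> * lam_cl u v ^ (k - 1) / (tanh (u - v) * cosh v ^ 2))
     else if b < a \<and> odd (a - b) then
       (let k = (a - b + 1) div 2 in
        - \<i> * lam_cl u v ^ (k - 1) / (cosh v * sinh (u - v)))
     else 0)"

definition Mq :: "nat \<Rightarrow> complex \<Rightarrow> complex \<Rightarrow> complex mat" where
  "Mq N u v = mat1 N (\<lambda>a b.
     if a = b then (if odd a then - \<i> * tanh (u - v) else \<i> * coth v)
     else if a < b \<and> even (b - a) then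
       (let k = (b - a) div 2 in
        if odd a then \<i> * lam_q u v ^ (k - 1) / (tanh v * cosh (u - v) ^ 2)
        else \<i> * lam_q u v ^ (k - 1) / (coth (u - v) * sinh v ^ 2))
     else if a < b \<and> odd (b - a) then
       (let k = (b - a + 1) div 2 in
        \<i> * lam_q u v ^ (k - 1) / (sinh v * cosh (u - v)))
     else 0)"

definition hcl_l :: "nat \<Rightarrow> complex \<Rightarrow> complex mat" where
  "hcl_l N u = mat1 N (\<lambda>a b.
     if a = b then (if even a then 1 else 0)
     else if a = b + 1 then - s_par u
     else if a = b + 2 \<and> odd b then 1 else 0)"

definition hq_l :: "nat \<Rightarrow> complex \<Rightarrow> complex mat" where
  "hq_l N u = mat1 N (\<lambda>a b.
     if a = b then (if even a then 1 else 0)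
     else if b = a + 1 then s_par u
     else if b = a + 2 \<and> odd a then 1 else 0)"

definition hcl_r :: "nat \<Rightarrow> complex \<Rightarrow> complex mat" where
  "hcl_r N u = mat1 N (\<lambda>a b.
     if a = b then (if odd a then 1 else 0)
     else if a = b + 1 then s_par u
     else if a = b + 2 \<and> even b then 1 else 0)"

definition hq_r :: "nat \<Rightarrow> complex \<Rightarrow> complex mat" where
  "hq_r N u = mat1 N (\<lambda>a b.
     if a = b then (if odd a then 1 else 0)
     else if b = a + 1 then - s_par u
     else if b = a + 2 \<and> even a then 1 else 0)"

definition root_subspace :: "complex mat \<Rightarrow> complex \<Rightarrow> complex vec set" where
  "root_subspace A e = mat_kernel ((char_matrix A e) ^\<^sub>m (dim_row A))"

definition root_match :: "nat \<Rightarrow> complex mat \<Rightarrow> complex mat \<Rightarrow> bool" where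
  "root_match N h M \<longleftrightarrow>
     card {e. eigenvalue h e} = 2 \<and> card {e. eigenvalue M e} = 2 \<and>
     (\<forall>e. eigenvalue h e \<longrightarrow>
        (\<exists>\<mu>. eigenvalue M \<mu> \<and> root_subspace h e = root_subspace M \<mu> \<and>
             dim_gen_eigenspace h e (2*N) = N \<and> dim_gen_eigenspace M \<mu> (2*N) = N \<and>
             (\<forall>n_as. jordan_nf h n_as \<longrightarrow> [p \<leftarrow> n_as. snd p = e] = [(N, e)]) \<and>
             (\<forall>n_as. jordan_nf M n_as \<longrightarrow> [p \<leftarrow> n_as. snd p = \<mu>] = [(N, \<mu>)])))"

definition generic2 :: "(complex \<Rightarrow> complex \<Rightarrow> bool) \<Rightarrow> bool" where
  "generic2 P \<longleftrightarrow> (\<exists>S :: (complex \<times> complex) set. closed S \<and> interior S = {} \<and>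
      (\<forall>u v. (u, v) \<notin> S \<longrightarrow> P u v))"

end

(*
  The classical matrices are lower triangular band matrices: h = h^cl_x has diagonal entries
  alternating between 0 and 1, and with T the shift by two and s = 1/cosh u it satisfies
  T (1 - s^2 - h) = h - h^2 and h T = T h, while M = M^cl(v), with alternating diagonal entries
  p and q, satisfies M (1 - lambda_cl T) = p (1 + T) + (q - p) h.  So M is a rational function
  of h, and clearing denominators gives (M - mu) P = (h - e) Q for e in {0, 1} and
  mu = p + (q - p) e, where P and Q are invertible and commute with h.  Hence all powers of
  M - mu and h - e have the same kernels, so the root subspaces coincide.  They have dimension N
  because each diagonal value occurs N times, and they carry a single Jordan block because
  the kernel of h - e lies in the kernel of T and is then cut down to a line by the last row.
  The quantum matrices are the classical ones for u - v instead of v, conjugated by the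
  reversal permutation (and negated in the case of M).  The argument only needs sinh and cosh
  to be nonzero at u, v and u - v, which fails only on three real hyperplanes of C^2.
*)

theory Submission
  imports Defs "Jordan_Normal_Form.Jordan_Normal_Form_Existence"
begin

section \<open>Sparse matrix products\<close>

lemma index_mult_mat_banded_col:
  fixes A B :: "'a :: semiring_0 mat"
  assumes A: "A \<in> carrier_mat n n" and B: "B \<in> carrier_mat n n" and ij: "i < n" "j < n"
    and band: "\<And>k. k < n \<Longrightarrow> k \<noteq> j \<Longrightarrow> k \<noteq> j + 1 \<Longrightarrow> k \<noteq> j + 2 \<Longrightarrow> B $$ (k, j) = 0"
  shows "(A * B) $$ (i, j) = A $$ (i, j) * B $$ (j, j)
    + (if j + 1 < n then A $$ (i, j + 1) * B $$ (j + 1, j) else 0)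
    + (if j + 2 < n then A $$ (i, j + 2) * B $$ (j + 2, j) else 0)"
proof -
  let ?f = "\<lambda>k. A $$ (i, k) * B $$ (k, j)"
  let ?K = "{k. k < n \<and> (k = j \<or> k = j + 1 \<or> k = j + 2)}"
  have "(A * B) $$ (i, j) = (\<Sum>k \<in> {0..<n}. ?f k)"
    using A B ij by (simp add: scalar_prod_def)
  also have "\<dots> = sum ?f ?K"
    by (rule sum.mono_neutral_right) (use band in auto)
  also have "?K = {j} \<union> (if j + 1 < n then {j + 1} else {}) \<union> (if j + 2 < n then {j + 2} else {})"
    using ij by auto
  also have "sum ?f \<dots> =
      ?f j + (if j + 1 < n then ?f (j + 1) else 0) + (if j + 2 < n then ?f (j + 2) else 0)"
    by (simp add: sum.union_disjoint add.assoc)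
  finally show ?thesis .
qed

lemma index_mult_mat_vec_single:
  assumes A: "A \<in> carrier_mat n n" and x: "x \<in> carrier_vec n" and i: "i < n" and m: "m < n"
    and others: "\<And>k. k < n \<Longrightarrow> k \<noteq> m \<Longrightarrow> A $$ (i, k) * x $ k = 0"
  shows "(A *\<^sub>v x) $ i = A $$ (i, m) * x $ m"
proof -
  have "(A *\<^sub>v x) $ i = (\<Sum>k \<in> {0..<n}. A $$ (i, k) * x $ k)"
    using A x i by (simp add: scalar_prod_def)
  also have "\<dots> = (\<Sum>k \<in> {m}. A $$ (i, k) * x $ k)"
    by (rule sum.mono_neutral_right) (use m others in auto)
  finally show ?thesis by simp
qed

section \<open>Equal root spaces from a factorization\<close>

lemma det_pow_mat:
  assumes "A \<in> carrier_mat n n"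
  shows "det (A ^\<^sub>m k) = det A ^ k"
  by (induction k) (use assms in \<open>auto simp: det_mult[of _ n]\<close>)

lemma mat_kernel_mult_det_nonzero:
  fixes A B :: "'a :: field mat"
  assumes A: "A \<in> carrier_mat n n" and B: "B \<in> carrier_mat n n" and det: "det A \<noteq> 0"
  shows "mat_kernel (A * B) = mat_kernel B"
proof -
  obtain C where C: "C \<in> carrier_mat n n" "C * A = 1\<^sub>m n"
    using det_non_zero_imp_unit[OF A det, of "()"] unfolding Units_def ring_mat_def by auto
  show ?thesis by (rule mat_kernel_mult_eq[OF B A C])
qed

lemma pow_mat_mult_commute:
  fixes A B :: "'a :: semiring_1 mat"
  assumes A: "A \<in> carrier_mat n n" and B: "B \<in> carrier_mat n n" and AB: "A * B = B * A"
  shows "A ^\<^sub>m k * B = B * A ^\<^sub>m k"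
proof (induction k)
  case (Suc k)
  have "A ^\<^sub>m Suc k * B = A ^\<^sub>m k * (A * B)" using A B by (simp add: assoc_mult_mat[of _ n n])
  also have "\<dots> = (A ^\<^sub>m k * B) * A" unfolding AB using A B by (simp add: assoc_mult_mat[of _ n n])
  also have "\<dots> = B * A ^\<^sub>m Suc k" unfolding Suc using A B by (simp add: assoc_mult_mat[of _ n n _ n _ n])
  finally show ?case .
qed (use A B in simp)

lemma pow_mat_mult_distrib_commute:
  fixes A B :: "'a :: semiring_1 mat"
  assumes A: "A \<in> carrier_mat n n" and B: "B \<in> carrier_mat n n" and AB: "A * B = B * A"
  shows "(A * B) ^\<^sub>m k = A ^\<^sub>m k * B ^\<^sub>m k"
proof (induction k)
  case (Suc k)
  have Ak: "A ^\<^sub>m k \<in> carrier_mat n n" and Bk: "B ^\<^sub>m k \<in> carrier_mat n n"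
    and prods: "A * B \<in> carrier_mat n n" "B ^\<^sub>m k * B \<in> carrier_mat n n"
    using A B by auto
  have "(A * B) ^\<^sub>m Suc k = A ^\<^sub>m k * ((B ^\<^sub>m k * A) * B)"
    using A B Ak Bk prods by (simp add: Suc assoc_mult_mat[of _ n n _ n _ n])
  also have "B ^\<^sub>m k * A = A * B ^\<^sub>m k" by (rule pow_mat_mult_commute[OF B A AB[symmetric]])
  finally show ?case using A B Ak Bk prods by (simp add: assoc_mult_mat[of _ n n _ n _ n])
qed (use A B in simp)

lemma mat_kernel_pow_eq_of_factorization:
  fixes X Y P Q :: "'a :: field mat"
  assumes X: "X \<in> carrier_mat n n" and Y: "Y \<in> carrier_mat n n"
    and P: "P \<in> carrier_mat n n" and Q: "Q \<in> carrier_mat n n"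
    and factor: "X * P = Y * Q" and PY: "P * Y = Y * P" and QY: "Q * Y = Y * Q"
    and det_P: "det P \<noteq> 0" and det_Q: "det Q \<noteq> 0"
  shows "mat_kernel (X ^\<^sub>m k) = mat_kernel (Y ^\<^sub>m k)"
proof -
  obtain P' where P': "P' \<in> carrier_mat n n" "P * P' = 1\<^sub>m n" "P' * P = 1\<^sub>m n"
    using det_non_zero_imp_unit[OF P det_P, of "()"] unfolding Units_def ring_mat_def by auto
  define G where "G = Q * P'"
  have G: "G \<in> carrier_mat n n" unfolding G_def using Q P' by simp
  have "X = X * (P * P')" using X P' by simp
  also have "\<dots> = (X * P) * P'" using X P P' by simp
  also have "\<dots> = Y * G" unfolding G_def factor using Y Q P' by simp
  finally have XG: "X = Y * G" .
  have P'Y: "P' * Y = Y * P'"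
  proof -
    have "P' * Y = P' * (Y * P) * P'" using P' Y P by (simp add: assoc_mult_mat[of _ n n _ n _ n])
    also have "\<dots> = Y * P'" unfolding PY[symmetric] using P' Y P
      by (simp add: assoc_mult_mat[of _ n n _ n _ n, symmetric] del: assoc_mult_mat)
    finally show ?thesis .
  qed
  have "G * Y = Q * (Y * P')" unfolding G_def P'Y[symmetric] using Q P' Y by simp
  also have "\<dots> = Y * G" unfolding G_def
    using Q P' Y QY assoc_mult_mat[OF Q Y P'(1)] assoc_mult_mat[OF Y Q P'(1)] by simp
  finally have GY: "G * Y = Y * G" .
  have det_G: "det G \<noteq> 0"
    using det_mult[OF P P'(1)] det_mult[OF Q P'(1)] det_Q P'(2) unfolding G_def by auto
  have "X ^\<^sub>m k = G ^\<^sub>m k * Y ^\<^sub>m k"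
    unfolding XG GY[symmetric] by (rule pow_mat_mult_distrib_commute[OF G Y GY])
  thus ?thesis
    using mat_kernel_mult_det_nonzero[of "G ^\<^sub>m k" n "Y ^\<^sub>m k"] G Y det_G by (simp add: det_pow_mat)
qed

definition same_root_spaces :: "'a :: field mat \<Rightarrow> 'a \<Rightarrow> 'a mat \<Rightarrow> 'a \<Rightarrow> bool" where
  "same_root_spaces A a B b \<longleftrightarrow>
     (\<forall>k. mat_kernel (char_matrix A a ^\<^sub>m k) = mat_kernel (char_matrix B b ^\<^sub>m k))"

(* By the two relations, the left-hand side is a quadratic polynomial in h with root e. *)
lemma char_matrix_mult_factorization:
  fixes h T M :: "'a :: field mat"
  assumes h: "h \<in> carrier_mat n n" and T: "T \<in> carrier_mat n n" and M: "M \<in> carrier_mat n n"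
    and shift: "T * (\<sigma> \<cdot>\<^sub>m 1\<^sub>m n - h) = h - h * h"
    and rel: "M * (1\<^sub>m n - r \<cdot>\<^sub>m T) = a \<cdot>\<^sub>m (1\<^sub>m n + T) + c \<cdot>\<^sub>m h"
    and idem: "e * e = e"
  shows "char_matrix M (a + c * e) * ((1\<^sub>m n - r \<cdot>\<^sub>m T) * (\<sigma> \<cdot>\<^sub>m 1\<^sub>m n - h)) =
    char_matrix h e * ((c * \<sigma> + (1 - e) * (a + (a + c * e) * r)) \<cdot>\<^sub>m 1\<^sub>m n - (a + (a + c * e) * r + c) \<cdot>\<^sub>m h)"
proof -
  let ?\<mu> = "a + c * e" and ?Z = "1\<^sub>m n - r \<cdot>\<^sub>m T" and ?W = "\<sigma> \<cdot>\<^sub>m 1\<^sub>m n - h"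
  have Z: "?Z \<in> carrier_mat n n" and W: "?W \<in> carrier_mat n n" and hh: "h * h \<in> carrier_mat n n"
    using h T by (auto simp: minus_carrier_mat)
  have "char_matrix M ?\<mu> * ?Z = M * ?Z + (- ?\<mu>) \<cdot>\<^sub>m ?Z"
    unfolding char_matrix_def using M Z
    by (simp add: add_mult_distrib_mat[of _ n n _ _ n] mult_smult_assoc_mat[of _ n n _ n]
        left_mult_one_mat[OF Z])
  also have "\<dots> = (a - ?\<mu>) \<cdot>\<^sub>m 1\<^sub>m n + (a + ?\<mu> * r) \<cdot>\<^sub>m T + c \<cdot>\<^sub>m h"
    unfolding rel by (rule eq_matI) (use h T in \<open>auto simp: algebra_simps\<close>)
  finally have XZ: "char_matrix M ?\<mu> * ?Z = (a - ?\<mu>) \<cdot>\<^sub>m 1\<^sub>m n + (a + ?\<mu> * r) \<cdot>\<^sub>m T + c \<cdot>\<^sub>m h" .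
  have hW: "h * ?W = \<sigma> \<cdot>\<^sub>m h - h * h"
    using h by (simp add: mult_minus_distrib_mat[of _ n n _ n] mult_smult_distrib[of _ n n _ n])
  have "char_matrix M ?\<mu> * (?Z * ?W) = (char_matrix M ?\<mu> * ?Z) * ?W"
    using M Z W by (simp add: assoc_mult_mat[of _ n n _ n _ n])
  also have "\<dots> = (a - ?\<mu>) \<cdot>\<^sub>m ?W + (a + ?\<mu> * r) \<cdot>\<^sub>m (T * ?W) + c \<cdot>\<^sub>m (h * ?W)"
    unfolding XZ using h T W
    by (simp add: add_mult_distrib_mat[of _ n n _ _ n] mult_smult_assoc_mat[of _ n n _ n])
  also have "\<dots> = char_matrix h e * ((c * \<sigma> + (1 - e) * (a + ?\<mu> * r)) \<cdot>\<^sub>m 1\<^sub>m n - (a + ?\<mu> * r + c) \<cdot>\<^sub>m h)"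
    unfolding shift hW char_matrix_def using h hh idem
    by (simp add: add_mult_distrib_mat[of _ n n _ _ n] mult_minus_distrib_mat[of _ n n _ n]
        mult_smult_distrib[of _ n n _ n]
        mult_smult_assoc_mat[of _ n n _ n] minus_carrier_mat)
      (rule eq_matI; auto simp: algebra_simps)
  finally show ?thesis .
qed

lemma char_matrix_mult_commute:
  fixes A h :: "'a :: field mat"
  assumes A: "A \<in> carrier_mat n n" and h: "h \<in> carrier_mat n n" and comm: "A * h = h * A"
  shows "A * char_matrix h e = char_matrix h e * A"
  unfolding char_matrix_def using A h
  by (simp add: mult_add_distrib_mat[of _ n n _ n] add_mult_distrib_mat[of _ n n _ _ n]
      mult_smult_distrib[of _ n n _ n] mult_smult_assoc_mat[of _ n n _ n] comm)

lemma affine_mat_mult_commute: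
  fixes h :: "'a :: comm_ring_1 mat"
  assumes h: "h \<in> carrier_mat n n"
  shows "(\<alpha> \<cdot>\<^sub>m 1\<^sub>m n - \<beta> \<cdot>\<^sub>m h) * h = h * (\<alpha> \<cdot>\<^sub>m 1\<^sub>m n - \<beta> \<cdot>\<^sub>m h)"
  using h by (simp add: mult_minus_distrib_mat[of _ n n _ n] minus_mult_distrib_mat[of _ n n _ _ n]
      mult_smult_distrib[of _ n n _ n] mult_smult_assoc_mat[of _ n n _ n])

lemma same_root_spaces_of_shift_relations:
  fixes h T M :: "'a :: field mat"
  assumes h: "h \<in> carrier_mat n n" and T: "T \<in> carrier_mat n n" and M: "M \<in> carrier_mat n n"
    and shift: "T * (\<sigma> \<cdot>\<^sub>m 1\<^sub>m n - h) = h - h * h"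
    and comm: "h * T = T * h"
    and rel: "M * (1\<^sub>m n - r \<cdot>\<^sub>m T) = a \<cdot>\<^sub>m (1\<^sub>m n + T) + c \<cdot>\<^sub>m h"
    and idem: "e * e = e"
    and det_Z: "det (1\<^sub>m n - r \<cdot>\<^sub>m T) \<noteq> 0" and det_W: "det (\<sigma> \<cdot>\<^sub>m 1\<^sub>m n - h) \<noteq> 0"
    and det_Q: "det ((c * \<sigma> + (1 - e) * (a + (a + c * e) * r)) \<cdot>\<^sub>m 1\<^sub>m n - (a + (a + c * e) * r + c) \<cdot>\<^sub>m h) \<noteq> 0"
  shows "same_root_spaces M (a + c * e) h e"
proof -
  let ?Z = "1\<^sub>m n - r \<cdot>\<^sub>m T" and ?W = "\<sigma> \<cdot>\<^sub>m 1\<^sub>m n - h"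
    and ?Q = "(c * \<sigma> + (1 - e) * (a + (a + c * e) * r)) \<cdot>\<^sub>m 1\<^sub>m n - (a + (a + c * e) * r + c) \<cdot>\<^sub>m h"
    and ?Y = "char_matrix h e"
  have Z: "?Z \<in> carrier_mat n n" and W: "?W \<in> carrier_mat n n" and Q: "?Q \<in> carrier_mat n n"
    and Y: "?Y \<in> carrier_mat n n"
    using h T by (auto simp: minus_carrier_mat)
  have "?Z * h = h * ?Z"
    using h T by (simp add: minus_mult_distrib_mat[of _ n n _ _ n] mult_minus_distrib_mat[of _ n n _ n]
        mult_smult_assoc_mat[of _ n n _ n] mult_smult_distrib[of _ n n _ n] comm)
  hence ZY: "?Z * ?Y = ?Y * ?Z" by (rule char_matrix_mult_commute[OF Z h])
  have "?W * h = h * ?W"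
    using h by (simp add: minus_mult_distrib_mat[of _ n n _ _ n] mult_minus_distrib_mat[of _ n n _ n]
        mult_smult_assoc_mat[of _ n n _ n] mult_smult_distrib[of _ n n _ n])
  hence WY: "?W * ?Y = ?Y * ?W" by (rule char_matrix_mult_commute[OF W h])
  have QY: "?Q * ?Y = ?Y * ?Q" by (rule char_matrix_mult_commute[OF Q h affine_mat_mult_commute[OF h]])
  have PY: "(?Z * ?W) * ?Y = ?Y * (?Z * ?W)"
    using Z W Y ZY WY assoc_mult_mat[OF Z W Y] assoc_mult_mat[OF Z Y W] assoc_mult_mat[OF Y Z W] by metis
  have det_P: "det (?Z * ?W) \<noteq> 0" using det_Z det_W det_mult[OF Z W] by simp
  show ?thesis
    unfolding same_root_spaces_def
    by (intro allI mat_kernel_pow_eq_of_factorization[OF _ Y _ Q _ PY QY det_P det_Q])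
      (use M Z W in \<open>auto intro: char_matrix_mult_factorization[OF h T M shift rel idem]\<close>)
qed

lemma mat_kernel_char_matrix_subset_shift:
  fixes h T :: "'a :: field mat"
  assumes h: "h \<in> carrier_mat n n" and T: "T \<in> carrier_mat n n"
    and shift: "T * (\<sigma> \<cdot>\<^sub>m 1\<^sub>m n - h) = h - h * h"
    and idem: "e * e = e" and \<sigma>: "\<sigma> \<noteq> e"
  shows "mat_kernel (char_matrix h e) \<subseteq> mat_kernel T"
proof -
  let ?Y = "char_matrix h e" and ?R = "T + (1 - e) \<cdot>\<^sub>m 1\<^sub>m n - h"
  have Y: "?Y \<in> carrier_mat n n" and R: "?R \<in> carrier_mat n n" and hh: "h * h \<in> carrier_mat n n"
    and Th: "T * h \<in> carrier_mat n n"
    using h T by (auto simp: minus_carrier_mat)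
  have "T * h = \<sigma> \<cdot>\<^sub>m T - (T * (\<sigma> \<cdot>\<^sub>m 1\<^sub>m n - h))"
    using h T by (simp add: mult_minus_distrib_mat[of _ n n _ n] mult_smult_distrib[of _ n n _ n])
      (rule eq_matI; auto)
  hence Th_eq: "T * h = \<sigma> \<cdot>\<^sub>m T - (h - h * h)" unfolding shift .
  have "?R * ?Y = T * h + (- e) \<cdot>\<^sub>m T + (1 - e) \<cdot>\<^sub>m h + (e * e - e) \<cdot>\<^sub>m 1\<^sub>m n - h * h + e \<cdot>\<^sub>m h"
    unfolding char_matrix_def using h T hh Th
    by (simp add: mult_add_distrib_mat[of _ n n _ n] add_mult_distrib_mat[of _ n n _ _ n]
        minus_mult_distrib_mat[of _ n n _ _ n] mult_smult_distrib[of _ n n _ n]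
        mult_smult_assoc_mat[of _ n n _ n] minus_carrier_mat)
      (rule eq_matI; auto simp: algebra_simps)
  also have "\<dots> = (\<sigma> - e) \<cdot>\<^sub>m T"
    unfolding Th_eq using h T hh idem by (intro eq_matI) (auto simp: algebra_simps)
  finally have RY: "?R * ?Y = (\<sigma> - e) \<cdot>\<^sub>m T" .
  have "mat_kernel ?Y \<subseteq> mat_kernel (?R * ?Y)" by (rule mat_kernel_mult_subset[OF Y R])
  also have "?R * ?Y = ((\<sigma> - e) \<cdot>\<^sub>m 1\<^sub>m n) * T"
    unfolding RY using T by (simp add: mult_smult_assoc_mat[of _ n n _ n])
  also have "mat_kernel \<dots> = mat_kernel T"
    by (rule mat_kernel_mult_det_nonzero) (use T \<sigma> in auto)
  finally show ?thesis .
qed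

lemma kernel_dim_eq_1_of_multiples:
  fixes A :: "'a :: field mat"
  assumes A: "A \<in> carrier_mat n n" and w: "w \<in> mat_kernel A" "w \<noteq> 0\<^sub>v n"
    and multiple: "\<And>x. x \<in> mat_kernel A \<Longrightarrow> \<exists>c. x = c \<cdot>\<^sub>v w"
  shows "kernel_dim A = 1"
proof -
  interpret K: kernel n n A by unfold_locales (rule A)
  have span: "K.Ker.span {w} = mat_kernel A"
  proof
    show "K.Ker.span {w} \<subseteq> mat_kernel A" using K.Ker.span_is_subset2 w(1) by simp
    show "mat_kernel A \<subseteq> K.Ker.span {w}"
    proof
      fix x assume "x \<in> mat_kernel A"
      then obtain c where c: "x = c \<cdot>\<^sub>v w" using multiple by blast
      have "w \<in> K.Ker.span {w}" using K.Ker.span_self w(1) by simp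
      moreover have "submodule class_ring (K.Ker.span {w}) K.VK"
        using K.Ker.span_is_submodule w(1) by simp
      ultimately show "x \<in> K.Ker.span {w}" unfolding c using submodule.smult_closed by fastforce
    qed
  qed
  have "K.Ker.dim = 1" by (rule K.Ker.dim1I) (use span w in auto)
  thus ?thesis by simp
qed

lemma kernel_dim_eq_1_of_coordinate:
  fixes A :: "'a :: field mat"
  assumes A: "A \<in> carrier_mat n n" and det: "det A = 0" and k: "k < n"
    and coord: "\<And>x. x \<in> mat_kernel A \<Longrightarrow> x $ k = 0 \<Longrightarrow> x = 0\<^sub>v n"
  shows "kernel_dim A = 1"
proof -
  obtain w where w: "w \<in> carrier_vec n" "w \<noteq> 0\<^sub>v n" "A *\<^sub>v w = 0\<^sub>v n"
    using det det_0_iff_vec_prod_zero_field[OF A] by blast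
  have wK: "w \<in> mat_kernel A" using w A by (auto intro: mat_kernelI)
  have wk: "w $ k \<noteq> 0" using coord[OF wK] w(2) by blast
  show ?thesis
  proof (rule kernel_dim_eq_1_of_multiples[OF A wK w(2)])
    fix x assume x: "x \<in> mat_kernel A"
    let ?c = "x $ k / w $ k"
    have xv: "x \<in> carrier_vec n" and Ax: "A *\<^sub>v x = 0\<^sub>v n" using mat_kernelD[OF A x] by auto
    have "A *\<^sub>v (x - ?c \<cdot>\<^sub>v w) = A *\<^sub>v x - ?c \<cdot>\<^sub>v (A *\<^sub>v w)"
      using A xv w by (simp add: mult_minus_distrib_mat_vec mult_mat_vec)
    hence "x - ?c \<cdot>\<^sub>v w \<in> mat_kernel A" using A xv w Ax by (auto intro!: mat_kernelI)
    moreover have "(x - ?c \<cdot>\<^sub>v w) $ k = 0" using xv w k wk by simp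
    ultimately have zero: "x - ?c \<cdot>\<^sub>v w = 0\<^sub>v n" by (rule coord)
    have "x = ?c \<cdot>\<^sub>v w"
    proof (rule eq_vecI)
      fix i assume "i < dim_vec (?c \<cdot>\<^sub>v w)"
      thus "x $ i = (?c \<cdot>\<^sub>v w) $ i" using arg_cong[OF zero, of "\<lambda>v. v $ i"] xv w by simp
    qed (use xv w in simp)
    thus "\<exists>c. x = c \<cdot>\<^sub>v w" ..
  qed
qed

section \<open>Triangular matrices and Jordan blocks\<close>

definition lower_triangular :: "'a :: zero mat \<Rightarrow> bool" where
  "lower_triangular A \<longleftrightarrow> (\<forall>i < dim_row A. \<forall>j < dim_col A. i < j \<longrightarrow> A $$ (i, j) = 0)"

lemma char_poly_lower_triangular:
  fixes A :: "'a :: idom mat"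
  assumes A: "A \<in> carrier_mat n n" and low: "lower_triangular A"
  shows "char_poly A = (\<Prod>a \<leftarrow> diag_mat A. [:- a, 1:])"
proof -
  have AT: "transpose_mat A \<in> carrier_mat n n" using A by simp
  have "upper_triangular (transpose_mat A)"
    using A low unfolding lower_triangular_def upper_triangular_def by auto
  hence "char_poly (transpose_mat A) = (\<Prod>a \<leftarrow> diag_mat (transpose_mat A). [:- a, 1:])"
    by (rule char_poly_upper_triangular[OF AT])
  moreover have "diag_mat (transpose_mat A) = diag_mat A" using A by (simp add: diag_mat_def)
  ultimately show ?thesis using A by simp
qed

lemma order_prod_linear_factors:
  "Polynomial.order e (\<Prod>a \<leftarrow> as. [:- a, 1:]) = count_list as (e :: 'a :: idom)"
proof (induction as)
  case (Cons a as)
  have "(\<Prod>a \<leftarrow> as. [:- a, 1:]) \<noteq> 0" by (auto simp: prod_list_zero_iff)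
  hence "[:- a, 1:] * (\<Prod>a \<leftarrow> as. [:- a, 1:]) \<noteq> 0" by (simp only: mult_eq_0_iff) simp
  moreover have "Polynomial.order e [:- a, 1:] = (if a = e then 1 else 0)"
    using order_power_n_n[of e 1] by (auto intro: order_0I)
  ultimately show ?case using Cons order_mult[of "[:- a, 1:]" "\<Prod>a \<leftarrow> as. [:- a, 1:]" e] by simp
qed (simp add: order_0I)

lemma eigenvalue_lower_triangular:
  fixes A :: "'a :: field mat"
  assumes A: "A \<in> carrier_mat n n" and low: "lower_triangular A"
  shows "eigenvalue A e \<longleftrightarrow> e \<in> set (diag_mat A)"
  unfolding eigenvalue_root_char_poly[OF A] char_poly_lower_triangular[OF A low]
  by (auto simp: poly_prod_list prod_list_zero_iff)

lemma order_char_poly_lower_triangular: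
  fixes A :: "'a :: idom mat"
  assumes A: "A \<in> carrier_mat n n" and low: "lower_triangular A"
  shows "Polynomial.order e (char_poly A) = count_list (diag_mat A) e"
  unfolding char_poly_lower_triangular[OF A low] by (rule order_prod_linear_factors)

lemma det_affine_lower_triangular_nonzero:
  fixes h :: "'a :: field mat"
  assumes h: "h \<in> carrier_mat n n" and low: "lower_triangular h"
    and diag: "\<And>i. i < n \<Longrightarrow> \<alpha> - \<beta> * h $$ (i, i) \<noteq> 0"
  shows "det (\<alpha> \<cdot>\<^sub>m 1\<^sub>m n - \<beta> \<cdot>\<^sub>m h) \<noteq> 0"
proof -
  have "det (\<alpha> \<cdot>\<^sub>m 1\<^sub>m n - \<beta> \<cdot>\<^sub>m h) = prod_list (diag_mat (\<alpha> \<cdot>\<^sub>m 1\<^sub>m n - \<beta> \<cdot>\<^sub>m h))"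
    by (rule det_lower_triangular[of n]) (use h low in \<open>auto simp: lower_triangular_def minus_carrier_mat\<close>)
  also have "\<dots> = (\<Prod>i = 0..<n. \<alpha> - \<beta> * h $$ (i, i))"
    using h by (simp add: prod_list_diag_prod minus_carrier_mat)
  finally show ?thesis using diag by simp
qed

lemma jordan_nf_exists_complex:
  fixes A :: "complex mat"
  assumes "A \<in> carrier_mat n n"
  obtains n_as where "jordan_nf A n_as"
  using char_poly_factorized[OF assms] jordan_nf_exists[OF assms] by blast

lemma dim_gen_eigenspace_eq_order:
  fixes A :: "complex mat"
  assumes A: "A \<in> carrier_mat n n"
  shows "dim_gen_eigenspace A e n = Polynomial.order e (char_poly A)"
proof -
  obtain n_as where jnf: "jordan_nf A n_as" using jordan_nf_exists_complex[OF A] by blast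
  have "Polynomial.order e (char_poly A) \<le> n"
  proof -
    have "char_poly A \<noteq> 0" using degree_monic_char_poly[OF A] by auto
    thus ?thesis using order_degree[of "char_poly A" e] degree_monic_char_poly[OF A] by simp
  qed
  hence small: "d \<le> n" if "(d, e) \<in> set n_as" for d
    using jordan_nf_block_size_order_bound[OF jnf that] by simp
  have "dim_gen_eigenspace A e n = (\<Sum>d \<leftarrow> map fst [(d, e') \<leftarrow> n_as. e' = e]. min n d)"
    by (rule dim_gen_eigenspace[OF jnf])
  also have "\<dots> = (\<Sum>d \<leftarrow> map fst [(d, e') \<leftarrow> n_as. e' = e]. d)"
    by (rule arg_cong[where f = sum_list], rule map_cong) (use small in auto)
  also have "[(d, e') \<leftarrow> n_as. e' = e] = [p \<leftarrow> n_as. snd p = e]" by (rule filter_cong) auto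
  also have "(\<Sum>d \<leftarrow> map fst [p \<leftarrow> n_as. snd p = e]. d) = Polynomial.order e (char_poly A)"
    unfolding jordan_nf_order[OF jnf] by simp
  finally show ?thesis .
qed

lemma jordan_nf_single_block:
  fixes A :: "complex mat"
  assumes jnf: "jordan_nf A n_as" and geom: "dim_gen_eigenspace A e 1 = 1"
  shows "[p \<leftarrow> n_as. snd p = e] = [(Polynomial.order e (char_poly A), e)]"
proof -
  let ?B = "[p \<leftarrow> n_as. snd p = e]"
  have blocks: "[(d, e') \<leftarrow> n_as. e' = e] = ?B" by (rule filter_cong) auto
  have pos: "0 < d" if "d \<in> set (map fst ?B)" for d
    using jnf that unfolding jordan_nf_def by (auto intro!: Nat.gr0I)
  have "1 = (\<Sum>d \<leftarrow> map fst ?B. min 1 d)"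
    using dim_gen_eigenspace[OF jnf, of e 1] geom blocks by simp
  also have "\<dots> = length ?B"
  proof -
    have "(\<Sum>d \<leftarrow> ds. min 1 d) = length ds" if "\<forall>d \<in> set ds. 0 < d" for ds :: "nat list"
      using that by (induction ds) auto
    from this[of "map fst ?B"] show ?thesis using pos by auto
  qed
  finally obtain p where B: "?B = [p]" by (metis length_0_conv length_Suc_conv One_nat_def)
  hence "p \<in> set ?B" by simp
  hence "snd p = e" by simp
  moreover have "fst p = Polynomial.order e (char_poly A)" using jordan_nf_order[OF jnf, of e] B by simp
  ultimately show ?thesis using B by (cases p) auto
qed

section \<open>Paired root spaces\<close>

definition root_paired :: "nat \<Rightarrow> complex mat \<Rightarrow> complex mat \<Rightarrow> bool" where
  "root_paired N h M \<longleftrightarrow>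
     h \<in> carrier_mat (2 * N) (2 * N) \<and> M \<in> carrier_mat (2 * N) (2 * N) \<and>
     card {e. eigenvalue h e} = 2 \<and> card {e. eigenvalue M e} = 2 \<and>
     (\<forall>e. eigenvalue h e \<longrightarrow>
        dim_gen_eigenspace h e 1 = 1 \<and> Polynomial.order e (char_poly h) = N \<and>
        (\<exists>\<mu>. eigenvalue M \<mu> \<and> same_root_spaces M \<mu> h e))"

lemma dim_gen_eigenspace_eq_of_same_root_spaces:
  assumes same: "same_root_spaces M \<mu> h e"
    and M: "M \<in> carrier_mat n n" and h: "h \<in> carrier_mat n n"
  shows "dim_gen_eigenspace M \<mu> k = dim_gen_eigenspace h e k"
proof -
  have "char_matrix M \<mu> ^\<^sub>m k \<in> carrier_mat n n" "char_matrix h e ^\<^sub>m k \<in> carrier_mat n n"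
    using M h by simp_all
  hence "dim_col (char_matrix M \<mu> ^\<^sub>m k) = n" "dim_col (char_matrix h e ^\<^sub>m k) = n"
    by (simp_all only: carrier_matD)
  thus ?thesis using same unfolding same_root_spaces_def dim_gen_eigenspace_def kernel_dim_def by simp
qed

lemma root_match_of_root_paired:
  assumes paired: "root_paired N h M"
  shows "root_match N h M"
  unfolding root_match_def
proof (intro conjI allI impI)
  have h: "h \<in> carrier_mat (2 * N) (2 * N)" and M: "M \<in> carrier_mat (2 * N) (2 * N)"
    using paired unfolding root_paired_def by auto
  show "card {e. eigenvalue h e} = 2" "card {e. eigenvalue M e} = 2"
    using paired unfolding root_paired_def by auto
  fix e assume "eigenvalue h e"
  then obtain \<mu> where \<mu>: "eigenvalue M \<mu>" and same: "same_root_spaces M \<mu> h e"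
    and geom: "dim_gen_eigenspace h e 1 = 1" and alg: "Polynomial.order e (char_poly h) = N"
    using paired unfolding root_paired_def by blast
  note dims = dim_gen_eigenspace_eq_of_same_root_spaces[OF same M h]
  have dim_h: "dim_gen_eigenspace h e (2 * N) = N"
    using dim_gen_eigenspace_eq_order[OF h] alg by simp
  have alg_M: "Polynomial.order \<mu> (char_poly M) = N"
    using dim_gen_eigenspace_eq_order[OF M, of \<mu>] dims[of "2 * N"] dim_h by simp
  show "\<exists>\<mu>. eigenvalue M \<mu> \<and> root_subspace h e = root_subspace M \<mu> \<and>
      dim_gen_eigenspace h e (2 * N) = N \<and> dim_gen_eigenspace M \<mu> (2 * N) = N \<and>
      (\<forall>n_as. jordan_nf h n_as \<longrightarrow> [p \<leftarrow> n_as. snd p = e] = [(N, e)]) \<and>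
      (\<forall>n_as. jordan_nf M n_as \<longrightarrow> [p \<leftarrow> n_as. snd p = \<mu>] = [(N, \<mu>)])"
  proof (intro exI[of _ \<mu>] conjI allI impI)
    show "root_subspace h e = root_subspace M \<mu>"
      using same h M unfolding same_root_spaces_def root_subspace_def by simp
    show "dim_gen_eigenspace M \<mu> (2 * N) = N" using dims dim_h by simp
    show "[p \<leftarrow> n_as. snd p = e] = [(N, e)]" if "jordan_nf h n_as" for n_as
      using jordan_nf_single_block[OF that geom] alg by simp
    show "[p \<leftarrow> n_as. snd p = \<mu>] = [(N, \<mu>)]" if "jordan_nf M n_as" for n_as
      using jordan_nf_single_block[OF that] dims[of 1] geom alg_M by simp
  qed (use \<mu> dim_h in auto)
qed

lemma mat_kernel_similar_mat_wit:
  assumes A: "A \<in> carrier_mat n n" and wit: "similar_mat_wit A B P Q"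
  shows "mat_kernel A = {v \<in> carrier_vec n. Q *\<^sub>v v \<in> mat_kernel B}"
proof -
  note W = similar_mat_witD2[OF A wit]
  have "mat_kernel A = mat_kernel (P * (B * Q))" using W by simp
  also have "\<dots> = mat_kernel (B * Q)" by (rule mat_kernel_mult_eq[of _ n n]) (use W in auto)
  also have "\<dots> = {v \<in> carrier_vec n. Q *\<^sub>v v \<in> mat_kernel B}"
    using W by (auto simp: mat_kernel_def)
  finally show ?thesis .
qed

lemma similar_mat_wit_carrier:
  assumes "similar_mat_wit A B P Q" and "B \<in> carrier_mat n n"
  shows "A \<in> carrier_mat n n"
proof -
  have "dim_row A = n"
    using carrier_matD(1)[OF similar_mat_witD(5)[OF refl assms(1)]] carrier_matD(1)[OF assms(2)] by linarith
  thus ?thesis using similar_mat_witD(4)[OF refl assms(1)] by (simp only:)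
qed

lemma eigenvalue_similar_mat:
  fixes A B :: "'a :: field mat"
  assumes sim: "similar_mat A B" and A: "A \<in> carrier_mat n n" and B: "B \<in> carrier_mat n n"
  shows "eigenvalue A e \<longleftrightarrow> eigenvalue B e"
  unfolding eigenvalue_root_char_poly[OF A] eigenvalue_root_char_poly[OF B] char_poly_similar[OF sim] ..

lemma same_root_spaces_similar:
  assumes same: "same_root_spaces M \<mu> h e"
    and wit_h: "similar_mat_wit h' h P Q" and wit_M: "similar_mat_wit M' M P Q"
    and h': "h' \<in> carrier_mat n n" and M': "M' \<in> carrier_mat n n"
  shows "same_root_spaces M' \<mu> h' e"
  unfolding same_root_spaces_def
proof
  fix k
  have wM: "similar_mat_wit (char_matrix M' \<mu> ^\<^sub>m k) (char_matrix M \<mu> ^\<^sub>m k) P Q"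
    and wh: "similar_mat_wit (char_matrix h' e ^\<^sub>m k) (char_matrix h e ^\<^sub>m k) P Q"
    by (rule similar_mat_wit_pow[OF similar_mat_wit_char_matrix[OF wit_M]],
        rule similar_mat_wit_pow[OF similar_mat_wit_char_matrix[OF wit_h]])
  have cM: "char_matrix M' \<mu> ^\<^sub>m k \<in> carrier_mat n n" and ch: "char_matrix h' e ^\<^sub>m k \<in> carrier_mat n n"
    using M' h' by simp_all
  show "mat_kernel (char_matrix M' \<mu> ^\<^sub>m k) = mat_kernel (char_matrix h' e ^\<^sub>m k)"
    unfolding mat_kernel_similar_mat_wit[OF cM wM] mat_kernel_similar_mat_wit[OF ch wh]
    using same unfolding same_root_spaces_def by simp
qed

lemma root_paired_similar:
  assumes paired: "root_paired N h M"
    and wit_h: "similar_mat_wit h' h P Q" and wit_M: "similar_mat_wit M' M P Q"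
  shows "root_paired N h' M'"
proof -
  have h: "h \<in> carrier_mat (2 * N) (2 * N)" and M: "M \<in> carrier_mat (2 * N) (2 * N)"
    using paired unfolding root_paired_def by auto
  have h': "h' \<in> carrier_mat (2 * N) (2 * N)" and M': "M' \<in> carrier_mat (2 * N) (2 * N)"
    by (rule similar_mat_wit_carrier[OF wit_h h], rule similar_mat_wit_carrier[OF wit_M M])
  have sim_h: "similar_mat h' h" and sim_M: "similar_mat M' M"
    using wit_h wit_M unfolding similar_mat_def by auto
  have cp_h: "char_poly h' = char_poly h" by (rule char_poly_similar[OF sim_h])
  note eig_h = eigenvalue_similar_mat[OF sim_h h' h] and eig_M = eigenvalue_similar_mat[OF sim_M M' M]
  note same = same_root_spaces_similar[OF _ wit_h wit_M h' M']
  show ?thesis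
    unfolding root_paired_def
  proof (intro conjI allI impI)
    show "card {e. eigenvalue h' e} = 2" "card {e. eigenvalue M' e} = 2"
      using paired unfolding root_paired_def eig_h eig_M by simp_all
    fix e assume "eigenvalue h' e"
    hence "eigenvalue h e" unfolding eig_h .
    then obtain \<mu> where "eigenvalue M \<mu>" "same_root_spaces M \<mu> h e"
      and "dim_gen_eigenspace h e 1 = 1" "Polynomial.order e (char_poly h) = N"
      using paired unfolding root_paired_def by blast
    thus "dim_gen_eigenspace h' e 1 = 1" "Polynomial.order e (char_poly h') = N"
      "\<exists>\<mu>. eigenvalue M' \<mu> \<and> same_root_spaces M' \<mu> h' e"
      using same eig_M unfolding dim_gen_eigenspace_similar[OF sim_h] cp_h by auto
  qed (use h' M' in auto)
qed

section \<open>Band matrices\<close>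

definition shift2 :: "nat \<Rightarrow> complex mat" where
  "shift2 n = mat n n (\<lambda>(i, j). if i = j + 2 then 1 else 0)"

(* h^cl_l and h^cl_r are band_h (2 * N) True (- s_par u) and band_h (2 * N) False (s_par u). *)
definition band_h :: "nat \<Rightarrow> bool \<Rightarrow> complex \<Rightarrow> complex mat" where
  "band_h n b t = mat n n (\<lambda>(i, j).
     if i = j then of_bool (odd i = b)
     else if i = j + 1 then t
     else if i = j + 2 then of_bool (odd j \<noteq> b)
     else 0)"

(* The entries of (p (1 + T) + (q - p) h) (1 - r T)^-1 for T = shift2 n and h = band_h n b t. *)
definition band_M :: "nat \<Rightarrow> bool \<Rightarrow> complex \<Rightarrow> complex \<Rightarrow> complex \<Rightarrow> complex \<Rightarrow> complex mat" where
  "band_M n b p q t r = mat n n (\<lambda>(i, j).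
     if i < j then 0
     else if i = j then (if odd j = b then q else p)
     else if even (i - j) then (if odd j = b then p + r * q else q + r * p) * r ^ ((i - j) div 2 - 1)
     else (q - p) * t * r ^ ((i - j) div 2))"

lemma shift2_carrier [simp]: "shift2 n \<in> carrier_mat n n"
  and dim_shift2 [simp]: "dim_row (shift2 n) = n" "dim_col (shift2 n) = n"
  by (simp_all add: shift2_def)

lemma index_shift2 [simp]: "i < n \<Longrightarrow> j < n \<Longrightarrow> shift2 n $$ (i, j) = (if i = j + 2 then 1 else 0)"
  by (simp add: shift2_def)

lemma band_h_carrier [simp]: "band_h n b t \<in> carrier_mat n n"
  and dim_band_h [simp]: "dim_row (band_h n b t) = n" "dim_col (band_h n b t) = n"
  by (simp_all add: band_h_def)

lemma index_band_h [simp]: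
  "i < n \<Longrightarrow> j < n \<Longrightarrow> band_h n b t $$ (i, j) =
     (if i = j then of_bool (odd i = b) else if i = j + 1 then t
      else if i = j + 2 then of_bool (odd j \<noteq> b) else 0)"
  by (simp add: band_h_def)

lemma band_M_carrier [simp]: "band_M n b p q t r \<in> carrier_mat n n"
  and dim_band_M [simp]: "dim_row (band_M n b p q t r) = n" "dim_col (band_M n b p q t r) = n"
  by (simp_all add: band_M_def)

lemma index_band_M [simp]:
  "i < n \<Longrightarrow> j < n \<Longrightarrow> band_M n b p q t r $$ (i, j) =
     (if i < j then 0
      else if i = j then (if odd j = b then q else p)
      else if even (i - j) then (if odd j = b then p + r * q else q + r * p) * r ^ ((i - j) div 2 - 1)
      else (q - p) * t * r ^ ((i - j) div 2))"
  by (simp add: band_M_def)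

lemma index_shift2_mult:
  assumes A: "A \<in> carrier_mat n n" and ij: "i < n" "j < n"
  shows "(shift2 n * A) $$ (i, j) = (if 2 \<le> i then A $$ (i - 2, j) else 0)"
proof -
  let ?f = "\<lambda>k. shift2 n $$ (i, k) * A $$ (k, j)"
  have "(shift2 n * A) $$ (i, j) = (\<Sum>k \<in> {0..<n}. ?f k)"
    using A ij by (simp add: scalar_prod_def)
  also have "\<dots> = sum ?f {k. k < n \<and> i = k + 2}"
    by (rule sum.mono_neutral_right) (use ij in auto)
  also have "{k. k < n \<and> i = k + 2} = (if 2 \<le> i then {i - 2} else {})"
    using ij by auto
  finally show ?thesis using ij by (cases "2 \<le> i") auto
qed

lemma index_mult_shift2:
  assumes A: "A \<in> carrier_mat n n" and ij: "i < n" "j < n"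
  shows "(A * shift2 n) $$ (i, j) = (if j + 2 < n then A $$ (i, j + 2) else 0)"
  by (subst index_mult_mat_banded_col[OF A shift2_carrier ij]) (use ij in auto)

lemma band_h_mult_shift2: "band_h n b t * shift2 n = shift2 n * band_h n b t"
proof (rule eq_matI)
  fix i j assume "i < dim_row (shift2 n * band_h n b t)" "j < dim_col (shift2 n * band_h n b t)"
  hence ij: "i < n" "j < n" by auto
  show "(band_h n b t * shift2 n) $$ (i, j) = (shift2 n * band_h n b t) $$ (i, j)"
    unfolding index_mult_shift2[OF band_h_carrier ij] index_shift2_mult[OF band_h_carrier ij]
    using ij by auto
qed auto

lemma nat_diff_cases:
  fixes i j :: nat
  obtains "i < j" | "i = j" | "i = j + 1" | "i = j + 2" | "i = j + 3" | "i = j + 4" | "j + 5 \<le> i"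
  by linarith

lemma shift2_band_h_identity:
  "shift2 n * ((1 - t\<^sup>2) \<cdot>\<^sub>m 1\<^sub>m n - band_h n b t) = band_h n b t - band_h n b t * band_h n b t"
proof (rule eq_matI)
  let ?h = "band_h n b t"
  fix i j assume "i < dim_row (?h - ?h * ?h)" "j < dim_col (?h - ?h * ?h)"
  hence ij: "i < n" "j < n" by auto
  have sq: "(?h * ?h) $$ (i, j) = ?h $$ (i, j) * ?h $$ (j, j)
    + (if j + 1 < n then ?h $$ (i, j + 1) * ?h $$ (j + 1, j) else 0)
    + (if j + 2 < n then ?h $$ (i, j + 2) * ?h $$ (j + 2, j) else 0)"
    by (rule index_mult_mat_banded_col) (use ij in auto)
  have W: "(1 - t\<^sup>2) \<cdot>\<^sub>m 1\<^sub>m n - ?h \<in> carrier_mat n n" by (simp add: minus_carrier_mat)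
  have diff: "(?h - ?h * ?h) $$ (i, j) = ?h $$ (i, j) - (?h * ?h) $$ (i, j)"
    by (rule index_minus_mat) (use ij in auto)
  show "(shift2 n * ((1 - t\<^sup>2) \<cdot>\<^sub>m 1\<^sub>m n - ?h)) $$ (i, j) = (?h - ?h * ?h) $$ (i, j)"
    unfolding index_shift2_mult[OF W ij] diff sq
    using ij by (cases i j rule: nat_diff_cases) (auto simp: power2_eq_square algebra_simps)
qed auto

lemma band_M_geometric:
  assumes "i < n" "j + 3 \<le> i"
  shows "band_M n b p q t r $$ (i, j) = r * band_M n b p q t r $$ (i, j + 2)"
proof -
  obtain d where d: "i = j + 3 + d" using assms(2) le_Suc_ex by blast
  show ?thesis
  proof (cases "even d")
    case True
    then obtain m where "d = 2 * m" by blast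
    hence "i - j = 2 * m + 3" "i - (j + 2) = 2 * m + 1" using d by auto
    thus ?thesis using assms by auto
  next
    case False
    then obtain m where "d = 2 * m + 1" using oddE by blast
    hence "i - j = 2 * m + 4" "i - (j + 2) = 2 * m + 2" using d by auto
    thus ?thesis using assms by auto
  qed
qed

lemma band_M_shift2_identity:
  "band_M n b p q t r * (1\<^sub>m n - r \<cdot>\<^sub>m shift2 n) = p \<cdot>\<^sub>m (1\<^sub>m n + shift2 n) + (q - p) \<cdot>\<^sub>m band_h n b t"
proof (rule eq_matI)
  let ?M = "band_M n b p q t r"
  fix i j assume "i < dim_row (p \<cdot>\<^sub>m (1\<^sub>m n + shift2 n) + (q - p) \<cdot>\<^sub>m band_h n b t)"
    "j < dim_col (p \<cdot>\<^sub>m (1\<^sub>m n + shift2 n) + (q - p) \<cdot>\<^sub>m band_h n b t)"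
  hence ij: "i < n" "j < n" by auto
  have Z: "1\<^sub>m n - r \<cdot>\<^sub>m shift2 n \<in> carrier_mat n n" by (simp add: minus_carrier_mat)
  have "(?M * (1\<^sub>m n - r \<cdot>\<^sub>m shift2 n)) $$ (i, j) =
      ?M $$ (i, j) - (if j + 2 < n then r * ?M $$ (i, j + 2) else 0)"
    by (subst index_mult_mat_banded_col[OF band_M_carrier Z ij]) (use ij in \<open>auto simp del: index_band_M\<close>)
  also have "\<dots> = (p \<cdot>\<^sub>m (1\<^sub>m n + shift2 n) + (q - p) \<cdot>\<^sub>m band_h n b t) $$ (i, j)"
  proof (cases "j + 3 \<le> i")
    case True
    thus ?thesis using ij band_M_geometric[OF ij(1) True] by (simp del: index_band_M)
  next
    case False
    hence "i < j \<or> i = j \<or> i = j + 1 \<or> i = j + 2" by linarith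
    thus ?thesis using ij by (elim disjE) (auto simp: algebra_simps)
  qed
  finally show "(?M * (1\<^sub>m n - r \<cdot>\<^sub>m shift2 n)) $$ (i, j) =
      (p \<cdot>\<^sub>m (1\<^sub>m n + shift2 n) + (q - p) \<cdot>\<^sub>m band_h n b t) $$ (i, j)" .
qed auto

lemma band_M_swap: "band_M n True p q (- t) r = band_M n False q p t r"
  by (rule eq_matI) (auto simp: algebra_simps)

lemma band_M_uminus: "band_M n b (- p) (- q) t r = - band_M n b p q t r"
  by (rule eq_matI) (auto simp: algebra_simps)

lemma lower_triangular_band_h: "lower_triangular (band_h n b t)"
  by (auto simp: lower_triangular_def)

lemma lower_triangular_band_M: "lower_triangular (band_M n b p q t r)"
  by (auto simp: lower_triangular_def)

lemma diag_band_h: "diag_mat (band_h n b t) = map (\<lambda>i. if odd i = b then 1 else 0) [0..<n]"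
  by (auto simp: diag_mat_def)

lemma diag_band_M: "diag_mat (band_M n b p q t r) = map (\<lambda>i. if odd i = b then q else p) [0..<n]"
  by (auto simp: diag_mat_def)

lemma set_alternating:
  assumes "1 \<le> N"
  shows "set (map (\<lambda>i. if odd i = b then x else y) [0..<2 * N]) = {x, y}"
proof -
  let ?f = "\<lambda>i :: nat. if odd i = b then x else y"
  have "?f 0 \<in> ?f ` {0..<2 * N}" "?f 1 \<in> ?f ` {0..<2 * N}" using assms by (intro imageI; simp)+
  hence "{?f 0, ?f 1} \<subseteq> ?f ` {0..<2 * N}" by blast
  moreover have "{?f 0, ?f 1} = {x, y}" by (cases b) auto
  moreover have "?f ` {0..<2 * N} \<subseteq> {x, y}" by auto
  ultimately show ?thesis by (metis equalityI set_map set_upt)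
qed

lemma count_list_alternating:
  assumes "x \<noteq> y"
  shows "count_list (map (\<lambda>i. if odd i = b then x else y) [0..<2 * N]) x = N"
    and "count_list (map (\<lambda>i. if odd i = b then x else y) [0..<2 * N]) y = N"
  by (induction N) (use assms in auto)

lemma eigenvalues_band_h:
  assumes "1 \<le> N"
  shows "{e. eigenvalue (band_h (2 * N) b t) e} = {0, 1}"
  unfolding eigenvalue_lower_triangular[OF band_h_carrier lower_triangular_band_h] diag_band_h
    set_alternating[OF assms] by auto

lemma eigenvalues_band_M:
  assumes "1 \<le> N"
  shows "{e. eigenvalue (band_M (2 * N) b p q t r) e} = {p, q}"
  unfolding eigenvalue_lower_triangular[OF band_M_carrier lower_triangular_band_M] diag_band_M
    set_alternating[OF assms] by auto

lemma order_char_poly_band_h: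
  assumes "e = 0 \<or> e = 1"
  shows "Polynomial.order e (char_poly (band_h (2 * N) b t)) = N"
  unfolding order_char_poly_lower_triangular[OF band_h_carrier lower_triangular_band_h] diag_band_h
  using count_list_alternating[of "1 :: complex" 0 b N] assms by auto

lemma mat_kernel_shift2_coordinate:
  assumes x: "x \<in> mat_kernel (shift2 n)" and j: "j + 2 < n"
  shows "x $ j = 0"
proof -
  have xv: "x \<in> carrier_vec n" and Tx: "shift2 n *\<^sub>v x = 0\<^sub>v n"
    using mat_kernelD[OF shift2_carrier x] by auto
  have "(shift2 n *\<^sub>v x) $ (j + 2) = shift2 n $$ (j + 2, j) * x $ j"
    by (rule index_mult_mat_vec_single[OF shift2_carrier xv]) (use j in auto)
  thus ?thesis using Tx j by simp
qed

lemma dim_gen_eigenspace_band_h_1: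
  assumes n: "2 \<le> n" and t: "t \<noteq> 0" "t\<^sup>2 \<noteq> 1" and e: "e = 0 \<or> e = 1"
    and eig: "eigenvalue (band_h n b t) e"
  shows "dim_gen_eigenspace (band_h n b t) e 1 = 1"
proof -
  let ?h = "band_h n b t" let ?Y = "char_matrix ?h e"
  have Y: "?Y \<in> carrier_mat n n" by simp
  have "kernel_dim ?Y = 1"
  proof (rule kernel_dim_eq_1_of_coordinate[OF Y _ _])
    show "det ?Y = 0" using eig eigenvalue_det[OF band_h_carrier] by blast
    show "n - 1 < n" using n by simp
    fix x assume x: "x \<in> mat_kernel ?Y" and last: "x $ (n - 1) = 0"
    have xv: "x \<in> carrier_vec n" and Yx: "?Y *\<^sub>v x = 0\<^sub>v n" using mat_kernelD[OF Y x] by auto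
    have "x \<in> mat_kernel (shift2 n)"
      using mat_kernel_char_matrix_subset_shift[OF band_h_carrier shift2_carrier
          shift2_band_h_identity[of n t b], of e] x e t by auto
    hence low: "x $ j = 0" if "j + 2 < n" for j using that by (rule mat_kernel_shift2_coordinate)
    have "(?Y *\<^sub>v x) $ (n - 1) = ?Y $$ (n - 1, n - 2) * x $ (n - 2)"
    proof (rule index_mult_mat_vec_single[OF Y xv])
      fix k assume "k < n" "k \<noteq> n - 2"
      hence "k + 2 < n \<or> k = n - 1" by linarith
      thus "?Y $$ (n - 1, k) * x $ k = 0" using low last by auto
    qed (use n in auto)
    moreover have "?Y $$ (n - 1, n - 2) = t" using n by (auto simp: char_matrix_def)
    ultimately have "x $ (n - 2) = 0" using Yx t n by simp
    show "x = 0\<^sub>v n"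
    proof (rule eq_vecI)
      fix j assume "j < dim_vec (0\<^sub>v n :: complex vec)"
      hence "j + 2 < n \<or> j = n - 2 \<or> j = n - 1" by auto
      thus "x $ j = 0\<^sub>v n $ j" using low last \<open>x $ (n - 2) = 0\<close> n by auto
    qed (use xv in simp)
  qed
  thus ?thesis by (simp add: dim_gen_eigenspace_def)
qed

lemma same_root_spaces_band:
  assumes t: "t \<noteq> 0" "t\<^sup>2 \<noteq> 1" and pq: "p \<noteq> q"
    and K_p: "(q - p) * (1 - t\<^sup>2) + p * (1 + r) \<noteq> 0"
    and K_q: "(q - p) * (1 - t\<^sup>2) - q * (1 + r) \<noteq> 0"
  shows "same_root_spaces (band_M n b p q t r) p (band_h n b t) 0"
    and "same_root_spaces (band_M n b p q t r) q (band_h n b t) 1"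
proof -
  let ?h = "band_h n b t" and ?M = "band_M n b p q t r" and ?T = "shift2 n"
  have low_T: "lower_triangular ?T" by (auto simp: lower_triangular_def)
  have det_Z: "det (1 \<cdot>\<^sub>m 1\<^sub>m n - r \<cdot>\<^sub>m ?T) \<noteq> 0"
    by (rule det_affine_lower_triangular_nonzero[OF shift2_carrier low_T]) simp
  have det_W: "det ((1 - t\<^sup>2) \<cdot>\<^sub>m 1\<^sub>m n - 1 \<cdot>\<^sub>m ?h) \<noteq> 0"
    by (rule det_affine_lower_triangular_nonzero[OF band_h_carrier lower_triangular_band_h]) (use t in auto)
  have one_smult: "1 \<cdot>\<^sub>m A = A" for A :: "complex mat" by (rule eq_matI) auto
  have same: "same_root_spaces ?M (p + (q - p) * e) ?h e"
    if e: "e = 0 \<or> e = 1"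
      and det_Q: "det (((q - p) * (1 - t\<^sup>2) + (1 - e) * (p + (p + (q - p) * e) * r)) \<cdot>\<^sub>m 1\<^sub>m n
        - (p + (p + (q - p) * e) * r + (q - p)) \<cdot>\<^sub>m ?h) \<noteq> 0" for e
    by (rule same_root_spaces_of_shift_relations[OF band_h_carrier shift2_carrier band_M_carrier
          shift2_band_h_identity band_h_mult_shift2 band_M_shift2_identity])
      (use e det_Z det_W det_Q in \<open>auto simp: one_smult\<close>)
  have "det (((q - p) * (1 - t\<^sup>2) + (1 - 0) * (p + (p + (q - p) * 0) * r)) \<cdot>\<^sub>m 1\<^sub>m n
      - (p + (p + (q - p) * 0) * r + (q - p)) \<cdot>\<^sub>m ?h) \<noteq> 0"
    by (rule det_affine_lower_triangular_nonzero[OF band_h_carrier lower_triangular_band_h])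
      (use K_p pq t in \<open>auto simp: algebra_simps\<close>)
  thus "same_root_spaces ?M p ?h 0" using same[of 0] by simp
  have \<sigma>_q: "(q - p) * (1 - t\<^sup>2) \<noteq> 0" using pq t by simp
  have "det (((q - p) * (1 - t\<^sup>2) + (1 - 1) * (p + (p + (q - p) * 1) * r)) \<cdot>\<^sub>m 1\<^sub>m n
      - (p + (p + (q - p) * 1) * r + (q - p)) \<cdot>\<^sub>m ?h) \<noteq> 0"
    by (rule det_affine_lower_triangular_nonzero[OF band_h_carrier lower_triangular_band_h])
      (use K_q \<sigma>_q in \<open>auto simp: algebra_simps\<close>)
  thus "same_root_spaces ?M q ?h 1" using same[of 1] by simp
qed

lemma root_paired_band:
  assumes N: "1 \<le> N" and t: "t \<noteq> 0" "t\<^sup>2 \<noteq> 1" and pq: "p \<noteq> q"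
    and K_p: "(q - p) * (1 - t\<^sup>2) + p * (1 + r) \<noteq> 0"
    and K_q: "(q - p) * (1 - t\<^sup>2) - q * (1 + r) \<noteq> 0"
  shows "root_paired N (band_h (2 * N) b t) (band_M (2 * N) b p q t r)"
  unfolding root_paired_def
proof (intro conjI allI impI)
  let ?h = "band_h (2 * N) b t" and ?M = "band_M (2 * N) b p q t r"
  show "card {e. eigenvalue ?h e} = 2" "card {e. eigenvalue ?M e} = 2"
    using eigenvalues_band_h[OF N] eigenvalues_band_M[OF N] pq by simp_all
  fix e assume "eigenvalue ?h e"
  hence e: "e = 0 \<or> e = 1" using eigenvalues_band_h[OF N, of b t] by blast
  show "dim_gen_eigenspace ?h e 1 = 1"
    by (rule dim_gen_eigenspace_band_h_1) (use N t e \<open>eigenvalue ?h e\<close> in auto)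
  show "Polynomial.order e (char_poly ?h) = N" by (rule order_char_poly_band_h[OF e])
  have "eigenvalue ?M p" "eigenvalue ?M q" using eigenvalues_band_M[OF N, of b p q t r] by blast+
  thus "\<exists>\<mu>. eigenvalue ?M \<mu> \<and> same_root_spaces ?M \<mu> ?h e"
    using e same_root_spaces_band[OF t pq K_p K_q] by auto
qed auto

section \<open>The matrices of the theorem\<close>

(* sv, cv, sw, cw, su, cu stand for sinh and cosh of v, of u - v and of u = (u - v) + v. *)
lemma hyperbolic_band_coefficients:
  fixes sv cv sw cw cu :: complex
  assumes nz: "sv \<noteq> 0" "cv \<noteq> 0" "sw \<noteq> 0" "cw \<noteq> 0" "cu \<noteq> 0"
    and pv: "cv\<^sup>2 = sv\<^sup>2 + 1" and pw: "cw\<^sup>2 = sw\<^sup>2 + 1" and cu: "cu = cw * cv + sw * sv"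
  defines "p \<equiv> - \<i> * (cw / sw)" and "q \<equiv> \<i> * (sv / cv)" and "r \<equiv> sv / cv * (cw / sw)"
  shows "q + r * p = - \<i> / (cv / sv * sw\<^sup>2)"
    and "p + r * q = - \<i> / (sw / cw * cv\<^sup>2)"
    and "q - p = \<i> * cu / (cv * sw)"
    and "(q - p) * (- (1 / cu)) = - \<i> / (cv * sw)"
proof -
  have "q + r * p = - \<i> * (sv / cv) * ((cw\<^sup>2 - sw\<^sup>2) / sw\<^sup>2)"
    unfolding p_def q_def r_def using nz by (simp add: field_simps power2_eq_square)
  thus "q + r * p = - \<i> / (cv / sv * sw\<^sup>2)" using pw nz by (simp add: field_simps)
  have "p + r * q = - \<i> * (cw / sw) * ((cv\<^sup>2 - sv\<^sup>2) / cv\<^sup>2)"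
    unfolding p_def q_def r_def using nz by (simp add: field_simps power2_eq_square)
  thus "p + r * q = - \<i> / (sw / cw * cv\<^sup>2)" using pv nz by (simp add: field_simps)
  show qp: "q - p = \<i> * cu / (cv * sw)"
    unfolding p_def q_def cu using nz by (simp add: field_simps)
  thus "(q - p) * (- (1 / cu)) = - \<i> / (cv * sw)" using nz by (simp add: field_simps)
qed

lemma hyperbolic_band_nondegeneracy:
  fixes sv cv sw cw su cu :: complex
  assumes nz: "sv \<noteq> 0" "cv \<noteq> 0" "sw \<noteq> 0" "cw \<noteq> 0" "cu \<noteq> 0"
    and pv: "cv\<^sup>2 = sv\<^sup>2 + 1" and pw: "cw\<^sup>2 = sw\<^sup>2 + 1"
    and cu: "cu = cw * cv + sw * sv" and su: "su = sw * cv + cw * sv"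
  defines "p \<equiv> - \<i> * (cw / sw)" and "q \<equiv> \<i> * (sv / cv)" and "r \<equiv> sv / cv * (cw / sw)"
    and "s \<equiv> 1 / cu"
  shows "(q - p) * (1 - s\<^sup>2) + p * (1 + r) = - \<i> * su / (sw\<^sup>2 * cu)"
    and "(q - p) * (1 - s\<^sup>2) - q * (1 + r) = \<i> * su / (cv\<^sup>2 * cu)"
proof -
  have qp: "q - p = \<i> * cu / (cv * sw)"
    using hyperbolic_band_coefficients(3)[OF nz pv pw cu] unfolding p_def q_def .
  have "cu\<^sup>2 - su\<^sup>2 = (cw\<^sup>2 - sw\<^sup>2) * (cv\<^sup>2 - sv\<^sup>2)"
    unfolding cu su by (simp add: algebra_simps power2_eq_square)
  hence "cu\<^sup>2 - 1 = su\<^sup>2" using pv pw by (simp add: algebra_simps)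
  moreover have "1 - s\<^sup>2 = (cu\<^sup>2 - 1) / cu\<^sup>2" unfolding s_def using nz by (simp add: field_simps)
  ultimately have s2: "1 - s\<^sup>2 = su\<^sup>2 / cu\<^sup>2" by simp
  have r1: "1 + r = su / (cv * sw)" unfolding r_def su using nz by (simp add: field_simps)
  have "(q - p) * (1 - s\<^sup>2) + p * (1 + r) =
      (\<i> * cu / (cv * sw)) * (su\<^sup>2 / cu\<^sup>2) + (- \<i> * (cw / sw)) * (su / (cv * sw))"
    unfolding qp s2 r1 by (simp add: p_def)
  also have "\<dots> = - \<i> * su * (cw * cu - su * sw) / (sw\<^sup>2 * cu * cv)"
    using nz by (simp add: field_simps power2_eq_square)
  also have "cw * cu - su * sw = cv"
    using pw unfolding cu su by (simp add: algebra_simps power2_eq_square)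
  also have "- \<i> * su * cv / (sw\<^sup>2 * cu * cv) = - \<i> * su / (sw\<^sup>2 * cu)"
    using nz by (simp add: field_simps)
  finally show "(q - p) * (1 - s\<^sup>2) + p * (1 + r) = - \<i> * su / (sw\<^sup>2 * cu)" .
  have "(q - p) * (1 - s\<^sup>2) - q * (1 + r) =
      (\<i> * cu / (cv * sw)) * (su\<^sup>2 / cu\<^sup>2) - (\<i> * (sv / cv)) * (su / (cv * sw))"
    unfolding qp s2 r1 by (simp add: q_def)
  also have "\<dots> = \<i> * su * (su * cv - sv * cu) / (cv\<^sup>2 * cu * sw)"
    using nz by (simp add: field_simps power2_eq_square)
  also have "su * cv - sv * cu = (cv\<^sup>2 - sv\<^sup>2) * sw"
    unfolding cu su by (simp add: algebra_simps power2_eq_square)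
  also have "\<dots> = sw" using pv by simp
  also have "\<i> * su * sw / (cv\<^sup>2 * cu * sw) = \<i> * su / (cv\<^sup>2 * cu)"
    using nz by (simp add: field_simps)
  finally show "(q - p) * (1 - s\<^sup>2) - q * (1 + r) = \<i> * su / (cv\<^sup>2 * cu)" .
qed

definition hyperbolic_nonvanishing :: "complex \<Rightarrow> complex \<Rightarrow> bool" where
  "hyperbolic_nonvanishing u v \<longleftrightarrow> (\<forall>w \<in> {u, v, u - v}. sinh w \<noteq> 0 \<and> cosh w \<noteq> 0)"

lemma Mcl_band_parameters:
  assumes "hyperbolic_nonvanishing u v"
  defines "p \<equiv> - \<i> * coth (u - v)" and "q \<equiv> \<i> * tanh v" and "r \<equiv> lam_cl u v" and "s \<equiv> s_par u"
  shows "q + r * p = - \<i> / (coth v * sinh (u - v) ^ 2)"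
    and "p + r * q = - \<i> / (tanh (u - v) * cosh v ^ 2)"
    and "(q - p) * (- s) = - \<i> / (cosh v * sinh (u - v))"
    and "s \<noteq> 0" and "s\<^sup>2 \<noteq> 1" and "p \<noteq> q"
    and "(q - p) * (1 - s\<^sup>2) + p * (1 + r) \<noteq> 0"
    and "(q - p) * (1 - s\<^sup>2) - q * (1 + r) \<noteq> 0"
proof -
  have nz: "sinh v \<noteq> 0" "cosh v \<noteq> 0" "sinh (u - v) \<noteq> 0" "cosh (u - v) \<noteq> 0" "cosh u \<noteq> 0"
    "sinh u \<noteq> 0"
    using assms(1) unfolding hyperbolic_nonvanishing_def by auto
  have u: "u = (u - v) + v" by simp
  have cu: "cosh u = cosh (u - v) * cosh v + sinh (u - v) * sinh v"
    by (subst u, subst cosh_add) simp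
  have su: "sinh u = sinh (u - v) * cosh v + cosh (u - v) * sinh v"
    by (subst u, subst sinh_add) simp
  have pqrs: "p = - \<i> * (cosh (u - v) / sinh (u - v))" "q = \<i> * (sinh v / cosh v)"
      "r = sinh v / cosh v * (cosh (u - v) / sinh (u - v))" "s = 1 / cosh u"
    unfolding p_def q_def r_def s_def coth_def tanh_def lam_cl_def s_par_def by simp_all
  note coeffs = hyperbolic_band_coefficients[OF nz(1-5) cosh_square_eq cosh_square_eq cu, folded pqrs]
  note nondeg = hyperbolic_band_nondegeneracy[OF nz(1-5) cosh_square_eq cosh_square_eq cu su, folded pqrs]
  show "q + r * p = - \<i> / (coth v * sinh (u - v) ^ 2)" "p + r * q = - \<i> / (tanh (u - v) * cosh v ^ 2)"
    "(q - p) * (- s) = - \<i> / (cosh v * sinh (u - v))"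
    using coeffs(1,2,4) by (simp_all add: coth_def tanh_def)
  show "s \<noteq> 0" unfolding pqrs using nz by simp
  show "s\<^sup>2 \<noteq> 1"
  proof
    assume "s\<^sup>2 = 1"
    hence "cosh u ^ 2 = 1" unfolding pqrs using nz by (simp add: field_simps)
    thus False using cosh_square_eq[of u] nz by simp
  qed
  show "p \<noteq> q" using coeffs(3) nz by auto
  show "(q - p) * (1 - s\<^sup>2) + p * (1 + r) \<noteq> 0" "(q - p) * (1 - s\<^sup>2) - q * (1 + r) \<noteq> 0"
    using nondeg nz by auto
qed

lemma index_Mcl:
  assumes "i < 2 * N" "j < 2 * N"
  shows "Mcl N u v $$ (i, j) =
     (if i < j then 0
      else if i = j then (if even j then - \<i> * coth (u - v) else \<i> * tanh v)
      else if even (i - j) then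
        (if even j then - \<i> * lam_cl u v ^ ((i - j) div 2 - 1) / (coth v * sinh (u - v) ^ 2)
         else - \<i> * lam_cl u v ^ ((i - j) div 2 - 1) / (tanh (u - v) * cosh v ^ 2))
      else - \<i> * lam_cl u v ^ ((i - j) div 2) / (cosh v * sinh (u - v)))"
proof -
  have "odd (i - j) \<Longrightarrow> (i - j + 1) div 2 - 1 = (i - j) div 2" by presburger
  thus ?thesis unfolding Mcl_def mat1_def using assms by (auto simp: Let_def)
qed

lemma index_Mq:
  assumes "i < 2 * N" "j < 2 * N"
  shows "Mq N u v $$ (i, j) =
     (if j < i then 0
      else if i = j then (if even i then - \<i> * tanh (u - v) else \<i> * coth v)
      else if even (j - i) then
        (if even i then \<i> * lam_q u v ^ ((j - i) div 2 - 1) / (tanh v * cosh (u - v) ^ 2)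
         else \<i> * lam_q u v ^ ((j - i) div 2 - 1) / (coth (u - v) * sinh v ^ 2))
      else \<i> * lam_q u v ^ ((j - i) div 2) / (sinh v * cosh (u - v)))"
proof -
  have "odd (j - i) \<Longrightarrow> (j - i + 1) div 2 - 1 = (j - i) div 2" by presburger
  thus ?thesis unfolding Mq_def mat1_def using assms by (auto simp: Let_def)
qed

lemma Mcl_eq_band_M:
  assumes "hyperbolic_nonvanishing u v"
  shows "Mcl N u v = band_M (2 * N) True (- \<i> * coth (u - v)) (\<i> * tanh v) (- s_par u) (lam_cl u v)"
    (is "_ = ?M")
proof (rule eq_matI)
  note coeff = Mcl_band_parameters(1-3)[OF assms]
  have scale: "- \<i> * x / d = (- \<i> / d) * x" for x d :: complex by simp
  fix i j assume "i < dim_row ?M" "j < dim_col ?M"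
  hence ij: "i < 2 * N" "j < 2 * N" by auto
  show "Mcl N u v $$ (i, j) = ?M $$ (i, j)"
    unfolding index_Mcl[OF ij] index_band_M[OF ij] using coeff
    by (auto simp: scale[of _ "coth v * sinh (u - v) ^ 2"] scale[of _ "tanh (u - v) * cosh v ^ 2"]
        scale[of _ "cosh v * sinh (u - v)"])
qed (auto simp: Mcl_def mat1_def)

lemma hcl_l_eq_band_h: "hcl_l N u = band_h (2 * N) True (- s_par u)"
  by (rule eq_matI) (auto simp: hcl_l_def mat1_def)

lemma hcl_r_eq_band_h: "hcl_r N u = band_h (2 * N) False (s_par u)"
  by (rule eq_matI) (auto simp: hcl_r_def mat1_def)

definition reversal_mat :: "nat \<Rightarrow> complex mat" where
  "reversal_mat n = mat n n (\<lambda>(i, j). if i + j + 1 = n then 1 else 0)"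

lemma reversal_mat_carrier [simp]: "reversal_mat n \<in> carrier_mat n n"
  and dim_reversal_mat [simp]: "dim_row (reversal_mat n) = n" "dim_col (reversal_mat n) = n"
  by (simp_all add: reversal_mat_def)

lemma index_reversal_mat_mult:
  assumes A: "A \<in> carrier_mat n n" and ij: "i < n" "j < n"
  shows "(reversal_mat n * A) $$ (i, j) = A $$ (n - 1 - i, j)"
    and "(A * reversal_mat n) $$ (i, j) = A $$ (i, n - 1 - j)"
proof -
  have "(reversal_mat n * A) $$ (i, j) = (reversal_mat n *\<^sub>v col A j) $ i"
    using A ij by simp
  also have "\<dots> = reversal_mat n $$ (i, n - 1 - i) * col A j $ (n - 1 - i)"
    by (rule index_mult_mat_vec_single) (use A ij in \<open>auto simp: reversal_mat_def\<close>)
  finally show "(reversal_mat n * A) $$ (i, j) = A $$ (n - 1 - i, j)"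
    using A ij by (simp add: reversal_mat_def)
  have "(A * reversal_mat n) $$ (i, j) = (A *\<^sub>v col (reversal_mat n) j) $ i"
    using A ij by simp
  also have "\<dots> = A $$ (i, n - 1 - j) * col (reversal_mat n) j $ (n - 1 - j)"
    by (rule index_mult_mat_vec_single) (use A ij in \<open>auto simp: reversal_mat_def split: if_splits\<close>)
  finally show "(A * reversal_mat n) $$ (i, j) = A $$ (i, n - 1 - j)"
    using A ij by (simp add: reversal_mat_def)
qed

lemma index_reversal_conj:
  assumes A: "A \<in> carrier_mat n n" and ij: "i < n" "j < n"
  shows "(reversal_mat n * A * reversal_mat n) $$ (i, j) = A $$ (n - 1 - i, n - 1 - j)"
  using index_reversal_mat_mult(2)[OF mult_carrier_mat[OF reversal_mat_carrier A] ij]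
    index_reversal_mat_mult(1)[OF A ij(1), of "n - 1 - j"] ij by simp

lemma reversal_mat_square: "reversal_mat n * reversal_mat n = 1\<^sub>m n"
proof (rule eq_matI)
  fix i j assume "i < dim_row (1\<^sub>m n :: complex mat)" "j < dim_col (1\<^sub>m n :: complex mat)"
  hence ij: "i < n" "j < n" by auto
  show "(reversal_mat n * reversal_mat n) $$ (i, j) = 1\<^sub>m n $$ (i, j)"
    unfolding index_reversal_mat_mult(1)[OF reversal_mat_carrier ij]
    using ij by (auto simp: reversal_mat_def)
qed auto

lemma similar_mat_wit_reversal:
  assumes "A \<in> carrier_mat n n"
  shows "similar_mat_wit (reversal_mat n * A * reversal_mat n) A (reversal_mat n) (reversal_mat n)"
  by (rule similar_mat_witI[OF reversal_mat_square reversal_mat_square refl])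
    (use assms mult_carrier_mat[OF mult_carrier_mat[OF reversal_mat_carrier assms] reversal_mat_carrier]
      in auto)

lemma hq_l_eq_reversal: "hq_l N u = reversal_mat (2 * N) * hcl_r N u * reversal_mat (2 * N)"
proof (rule eq_matI)
  fix i j assume "i < dim_row (reversal_mat (2 * N) * hcl_r N u * reversal_mat (2 * N))"
    "j < dim_col (reversal_mat (2 * N) * hcl_r N u * reversal_mat (2 * N))"
  hence ij: "i < 2 * N" "j < 2 * N" by auto
  have rev: "2 * N - 1 - i < 2 * N" "2 * N - 1 - j < 2 * N" using ij by auto
  have rel: "(2 * N - 1 - i = 2 * N - 1 - j) = (i = j)"
    "(2 * N - 1 - i = 2 * N - 1 - j + 1) = (j = i + 1)" "(2 * N - 1 - i = 2 * N - 1 - j + 2) = (j = i + 2)"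
    using ij by auto
  have par: "odd (2 * N - 1 - i) = even i" "odd (2 * N - 1 - j) = even j" using ij by presburger+
  show "hq_l N u $$ (i, j) = (reversal_mat (2 * N) * hcl_r N u * reversal_mat (2 * N)) $$ (i, j)"
    unfolding hcl_r_eq_band_h index_reversal_conj[OF band_h_carrier ij] index_band_h[OF rev] rel par
    using ij by (simp add: hq_l_def mat1_def)
qed (auto simp: hq_l_def mat1_def)

lemma hq_r_eq_reversal: "hq_r N u = reversal_mat (2 * N) * hcl_l N u * reversal_mat (2 * N)"
proof (rule eq_matI)
  fix i j assume "i < dim_row (reversal_mat (2 * N) * hcl_l N u * reversal_mat (2 * N))"
    "j < dim_col (reversal_mat (2 * N) * hcl_l N u * reversal_mat (2 * N))"
  hence ij: "i < 2 * N" "j < 2 * N" by auto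
  have rev: "2 * N - 1 - i < 2 * N" "2 * N - 1 - j < 2 * N" using ij by auto
  have rel: "(2 * N - 1 - i = 2 * N - 1 - j) = (i = j)"
    "(2 * N - 1 - i = 2 * N - 1 - j + 1) = (j = i + 1)" "(2 * N - 1 - i = 2 * N - 1 - j + 2) = (j = i + 2)"
    using ij by auto
  have par: "odd (2 * N - 1 - i) = even i" "odd (2 * N - 1 - j) = even j" using ij by presburger+
  show "hq_r N u $$ (i, j) = (reversal_mat (2 * N) * hcl_l N u * reversal_mat (2 * N)) $$ (i, j)"
    unfolding hcl_l_eq_band_h index_reversal_conj[OF band_h_carrier ij] index_band_h[OF rev] rel par
    using ij by (simp add: hq_r_def mat1_def)
qed (auto simp: hq_r_def mat1_def)

lemma Mq_eq_reversal: "Mq N u v = reversal_mat (2 * N) * (- Mcl N u (u - v)) * reversal_mat (2 * N)"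
proof (rule eq_matI)
  let ?J = "reversal_mat (2 * N)"
  have Mcl: "- Mcl N u (u - v) \<in> carrier_mat (2 * N) (2 * N)" by (simp add: Mcl_def mat1_def)
  fix i j assume "i < dim_row (?J * (- Mcl N u (u - v)) * ?J)" "j < dim_col (?J * (- Mcl N u (u - v)) * ?J)"
  hence ij: "i < 2 * N" "j < 2 * N" by auto
  have rev: "2 * N - 1 - i < 2 * N" "2 * N - 1 - j < 2 * N" using ij by auto
  have par: "even (2 * N - 1 - j) \<longleftrightarrow> odd j" using ij by presburger
  have rel: "(2 * N - 1 - i < 2 * N - 1 - j) = (j < i)" "(2 * N - 1 - i = 2 * N - 1 - j) = (i = j)"
    "(2 * N - 1 - i) - (2 * N - 1 - j) = j - i" using ij by auto
  have lam: "lam_cl u (u - v) = lam_q u v" by (simp add: lam_cl_def lam_q_def)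
  have neg: "(- Mcl N u (u - v)) $$ (2 * N - 1 - i, 2 * N - 1 - j) =
      - Mcl N u (u - v) $$ (2 * N - 1 - i, 2 * N - 1 - j)"
    by (rule index_uminus_mat(1)) (use rev in \<open>simp_all add: Mcl_def mat1_def\<close>)
  have par': "odd j \<longleftrightarrow> odd i" if "i < j" "even (j - i)" using that by presburger
  show "Mq N u v $$ (i, j) = (?J * (- Mcl N u (u - v)) * ?J) $$ (i, j)"
    unfolding index_reversal_conj[OF Mcl ij] neg index_Mcl[OF rev] index_Mq[OF ij] rel lam
    using ij par par' by simp
qed (auto simp: Mq_def mat1_def)

lemma root_paired_Mcl:
  assumes N: "1 \<le> N" and uv: "hyperbolic_nonvanishing u v"
  shows "root_paired N (hcl_l N u) (Mcl N u v)" and "root_paired N (hcl_r N u) (Mcl N u v)"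
    and "root_paired N (hcl_l N u) (- Mcl N u v)" and "root_paired N (hcl_r N u) (- Mcl N u v)"
proof -
  define p q r s where "p = - \<i> * coth (u - v)" and "q = \<i> * tanh v" and "r = lam_cl u v" and "s = s_par u"
  have M: "Mcl N u v = band_M (2 * N) True p q (- s) r"
    unfolding p_def q_def r_def s_def by (rule Mcl_eq_band_M[OF uv])
  note params = Mcl_band_parameters(4-8)[OF uv, folded p_def q_def r_def s_def]
  have "(p - q) * (1 - s\<^sup>2) + q * (1 + r) = - ((q - p) * (1 - s\<^sup>2) - q * (1 + r))"
    "(p - q) * (1 - s\<^sup>2) - p * (1 + r) = - ((q - p) * (1 - s\<^sup>2) + p * (1 + r))"
    by (simp_all add: algebra_simps)
  hence swap: "(p - q) * (1 - s\<^sup>2) + q * (1 + r) \<noteq> 0" "(p - q) * (1 - s\<^sup>2) - p * (1 + r) \<noteq> 0"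
    using params(4,5) by (simp_all only: neg_equal_0_iff_equal not_False_eq_True)
  show "root_paired N (hcl_l N u) (Mcl N u v)"
    unfolding hcl_l_eq_band_h M s_def[symmetric] by (rule root_paired_band[OF N]) (use params in auto)
  show "root_paired N (hcl_l N u) (- Mcl N u v)"
    unfolding hcl_l_eq_band_h M s_def[symmetric] band_M_uminus[symmetric]
    by (rule root_paired_band[OF N]) (use params in \<open>auto simp: algebra_simps\<close>)
  show "root_paired N (hcl_r N u) (Mcl N u v)"
    unfolding hcl_r_eq_band_h M s_def[symmetric] band_M_swap
    by (rule root_paired_band[OF N _ _ _ swap]) (use params in auto)
  show "root_paired N (hcl_r N u) (- Mcl N u v)"
    unfolding hcl_r_eq_band_h M s_def[symmetric] band_M_swap band_M_uminus[symmetric]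
    by (rule root_paired_band[OF N]) (use params in \<open>auto simp: algebra_simps\<close>)
qed

lemma root_paired_Mq:
  assumes N: "1 \<le> N" and uv: "hyperbolic_nonvanishing u (u - v)"
  shows "root_paired N (hq_l N u) (Mq N u v)" and "root_paired N (hq_r N u) (Mq N u v)"
proof -
  have hcl: "hcl_l N u \<in> carrier_mat (2 * N) (2 * N)" "hcl_r N u \<in> carrier_mat (2 * N) (2 * N)"
    and Mcl: "- Mcl N u (u - v) \<in> carrier_mat (2 * N) (2 * N)"
    by (simp_all add: hcl_l_def hcl_r_def Mcl_def mat1_def)
  show "root_paired N (hq_l N u) (Mq N u v)"
    unfolding hq_l_eq_reversal Mq_eq_reversal
    by (rule root_paired_similar[OF root_paired_Mcl(4)[OF N uv]
          similar_mat_wit_reversal[OF hcl(2)] similar_mat_wit_reversal[OF Mcl]])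
  show "root_paired N (hq_r N u) (Mq N u v)"
    unfolding hq_r_eq_reversal Mq_eq_reversal
    by (rule root_paired_similar[OF root_paired_Mcl(3)[OF N uv]
          similar_mat_wit_reversal[OF hcl(1)] similar_mat_wit_reversal[OF Mcl]])
qed

section \<open>Genericity\<close>

lemma Re_eq_0_if_sinh_or_cosh_eq_0:
  fixes w :: complex
  assumes "sinh w = 0 \<or> cosh w = 0"
  shows "Re w = 0"
proof -
  have "exp w ^ 2 = 1 \<or> exp w ^ 2 = -1"
    using assms unfolding sinh_zero_iff cosh_zero_iff by auto
  hence "norm (exp w) ^ 2 = 1" by (metis norm_minus_cancel norm_one norm_power)
  hence "exp (Re w) = 1 \<or> exp (Re w) = -1" by (simp add: norm_exp_eq_Re power2_eq_1_iff)
  thus ?thesis using exp_gt_zero[of "Re w"] by auto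
qed

lemma hyperbolic_nonvanishing_if_Re_nonzero:
  assumes "Re u \<noteq> 0" "Re v \<noteq> 0" "Re (u - v) \<noteq> 0"
  shows "hyperbolic_nonvanishing u v"
  using assms Re_eq_0_if_sinh_or_cosh_eq_0 unfolding hyperbolic_nonvanishing_def by blast

lemma interior_level_set_empty:
  fixes f :: "'a :: real_normed_vector \<Rightarrow> real"
  assumes shift: "\<And>x t. f (x + t *\<^sub>R d) = f x + t"
  shows "interior {x. f x = c} = {}"
proof (rule ccontr)
  assume "interior {x. f x = c} \<noteq> {}"
  then obtain x T where T: "open T" "x \<in> T" "T \<subseteq> {x. f x = c}" by (meson ex_in_conv interiorE)
  then obtain e where e: "e > 0" "\<And>y. dist y x < e \<Longrightarrow> y \<in> T" unfolding open_dist by blast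
  have "d \<noteq> 0" using shift[of x 1] by auto
  define t where "t = e / (2 * norm d)"
  have "t > 0" using e(1) \<open>d \<noteq> 0\<close> unfolding t_def by simp
  have "dist (x + t *\<^sub>R d) x = e / 2"
    using e(1) \<open>d \<noteq> 0\<close> unfolding t_def dist_norm by simp
  hence "x + t *\<^sub>R d \<in> T" using e by simp
  hence "f (x + t *\<^sub>R d) = c" "f x = c" using T by auto
  thus False using shift[of x t] \<open>t > 0\<close> by simp
qed

lemma generic2_Re_nonzero: "generic2 (\<lambda>u v. Re u \<noteq> 0 \<and> Re v \<noteq> 0 \<and> Re (u - v) \<noteq> 0)"
proof -
  let ?A = "{p :: complex \<times> complex. Re (fst p) = 0}" and ?B = "{p :: complex \<times> complex. Re (snd p) = 0}"
    and ?C = "{p :: complex \<times> complex. Re (fst p - snd p) = 0}"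
  have closed: "closed ?A" "closed ?B" "closed ?C"
    by (intro closed_Collect_eq continuous_intros)+
  have "interior ?A = {}" by (rule interior_level_set_empty[where d = "(1, 0)"]) simp
  moreover have "interior ?B = {}" by (rule interior_level_set_empty[where d = "(0, 1)"]) simp
  moreover have "interior ?C = {}" by (rule interior_level_set_empty[where d = "(1, 0)"]) simp
  ultimately have "interior (?A \<union> ?B \<union> ?C) = {}"
    using closed by (simp add: interior_closed_Un_empty_interior closed_Un)
  moreover have "closed (?A \<union> ?B \<union> ?C)" using closed by (intro closed_Un)
  ultimately show ?thesis unfolding generic2_def by (intro exI[of _ "?A \<union> ?B \<union> ?C"]) auto
qed

lemma generic2_mono:
  assumes "generic2 P" and "\<And>u v. P u v \<Longrightarrow> Q u v"
  shows "generic2 Q"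
  using assms unfolding generic2_def by blast

theorem mainTheorem3:
  fixes N :: nat
  assumes "N \<ge> 1"
  shows "generic2 (\<lambda>u v.
           root_match N (hcl_l N u) (Mcl N u v) \<and> root_match N (hcl_r N u) (Mcl N u v) \<and>
           root_match N (hq_l N u) (Mq N u v) \<and> root_match N (hq_r N u) (Mq N u v))"
proof (rule generic2_mono[OF generic2_Re_nonzero], elim conjE)
  fix u v :: complex
  assume Re: "Re u \<noteq> 0" "Re v \<noteq> 0" "Re (u - v) \<noteq> 0"
  have "hyperbolic_nonvanishing u v" and "hyperbolic_nonvanishing u (u - v)"
    using Re by (auto intro: hyperbolic_nonvanishing_if_Re_nonzero)
  thus "root_match N (hcl_l N u) (Mcl N u v) \<and> root_match N (hcl_r N u) (Mcl N u v) \<and>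
      root_match N (hq_l N u) (Mq N u v) \<and> root_match N (hq_r N u) (Mq N u v)"
    using root_paired_Mcl(1,2) root_paired_Mq assms by (auto intro: root_match_of_root_paired)
qed

end
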